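(* Let $\mathrm{M}$ be a simple matroid on a finite set $E$, let $\mathcal{G}$ be a building set of its lattice of flats, and let $e\in E$. Then the set \[ \mathcal{G}\setminus e=\{S\in\mathcal{L}(\mathrm{M}\setminus e):\operatorname{cl}_{\mathrm{M}}(S)\in\mathcal{G}\} \] is a building set of the lattice of flats $\mathcal{L}(\mathrm{M}\setminus e)$ of the deletion $\mathrm{M}\setminus e$.
   Context: Flats are ordered by inclusion, $\hat0=\varnothing$, join $F\vee G=\operatorname{cl}(F\cup G)$. A building set of a geometric lattice $\mathcal{L}$ is $\mathcal{G}\subseteq\mathcal{L}\setminus\{\hat0\}$ such that for every $F\neq\hat0$, with $\max\mathcal{G}_{\leqslant F}$ the set of maximal elements of $\{G\in\mathcal{G}:G\leqslant F\}$, the join map $\prod_{G\in\max\mathcal{G}_{\leqslant F}}[\hat0,G]\to[\hat0,F]$ is a poset isomorphism. *)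

theory Defs
  imports Main "HOL-Library.FuncSet"
begin

definition matroid :: "'a set \<Rightarrow> 'a set set \<Rightarrow> bool" where
  "matroid E Ind \<longleftrightarrow> finite E \<and> Ind \<subseteq> Pow E \<and> {} \<in> Ind
     \<and> (\<forall>I J. J \<in> Ind \<longrightarrow> I \<subseteq> J \<longrightarrow> I \<in> Ind)
     \<and> (\<forall>I J. I \<in> Ind \<longrightarrow> J \<in> Ind \<longrightarrow> card I < card J \<longrightarrow>
           (\<exists>x \<in> J - I. insert x I \<in> Ind))"

definition rk :: "'a set set \<Rightarrow> 'a set \<Rightarrow> nat" where
  "rk Ind S = Max (card ` {I. I \<subseteq> S \<and> I \<in> Ind})"

definition cl :: "'a set \<Rightarrow> 'a set set \<Rightarrow> 'a set \<Rightarrow> 'a set" where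
  "cl E Ind S = {x \<in> E. rk Ind (insert x S) = rk Ind S}"

definition flat :: "'a set \<Rightarrow> 'a set set \<Rightarrow> 'a set \<Rightarrow> bool" where
  "flat E Ind F \<longleftrightarrow> F \<subseteq> E \<and> cl E Ind F = F"

definition flats :: "'a set \<Rightarrow> 'a set set \<Rightarrow> 'a set set" where
  "flats E Ind = {F. flat E Ind F}"

text \<open>Simple: no loops and no parallel elements.\<close>
definition simple :: "'a set \<Rightarrow> 'a set set \<Rightarrow> bool" where
  "simple E Ind \<longleftrightarrow> (\<forall>x \<in> E. \<forall>y \<in> E. {x, y} \<in> Ind)"

text \<open>Deletion of e: ground set E - {e}, independent sets those avoiding e.\<close>
definition del_ind :: "'a set set \<Rightarrow> 'a \<Rightarrow> 'a set set" where
  "del_ind Ind e = {I \<in> Ind. e \<notin> I}"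

definition join_fam :: "'a set \<Rightarrow> 'a set set \<Rightarrow> 'a set set \<Rightarrow> ('a set \<Rightarrow> 'a set) \<Rightarrow> 'a set" where
  "join_fam E Ind A x = cl E Ind (\<Union>G \<in> A. x G)"

definition maxG :: "'a set set \<Rightarrow> 'a set \<Rightarrow> 'a set set" where
  "maxG \<G> F = {G \<in> \<G>. G \<subseteq> F \<and> \<not> (\<exists>H \<in> \<G>. H \<subseteq> F \<and> G \<subset> H)}"

definition interval :: "'a set \<Rightarrow> 'a set set \<Rightarrow> 'a set \<Rightarrow> 'a set set" where
  "interval E Ind F = {X \<in> flats E Ind. cl E Ind {} \<subseteq> X \<and> X \<subseteq> F}"

text \<open>Building set: for each F \<noteq> bottom, the join map from the product poset
  of intervals [bottom, G] (G maximal in \<G> below F, componentwise order)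
  onto [bottom, F] is a poset isomorphism.\<close>
definition building_set :: "'a set \<Rightarrow> 'a set set \<Rightarrow> 'a set set \<Rightarrow> bool" where
  "building_set E Ind \<G> \<longleftrightarrow>
     \<G> \<subseteq> flats E Ind - {cl E Ind {}} \<and>
     (\<forall>F \<in> flats E Ind. F \<noteq> cl E Ind {} \<longrightarrow>
        (let A = maxG \<G> F; P = (\<Pi>\<^sub>E G \<in> A. interval E Ind G) in
          bij_betw (join_fam E Ind A) P (interval E Ind F) \<and>
          (\<forall>x \<in> P. \<forall>y \<in> P. (\<forall>G \<in> A. x G \<subseteq> y G) \<longleftrightarrow>
               join_fam E Ind A x \<subseteq> join_fam E Ind A y)))"

end

theory Submission
  imports Defs
begin

text \<open>
  In a simple matroid the bottom flat is empty and the atoms are the singletons, and \<G> is a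
  building set iff for every nonempty flat F the restriction M|F is the direct sum of the
  restrictions M|G, G maximal in \<G> below F: these G partition F, and the closure of any X \<subseteq> F
  is the union of the closures of the pieces X \<inter> G.

  Given a nonempty flat F' of M\e, put F = cl(F'), so that F' = F - {e} and F = cl(F - {e}).
  As closures split along the summands, every summand G satisfies cl(G - {e}) = G. Hence the
  sets G - {e} are flats of M\e with closure G \<in> \<G>, they are exactly the maximal elements of
  \<G>\e below F', and removing e from the direct sum decomposition of M|F gives a direct sum
  decomposition of (M\e)|F'.
\<close>

section \<open>Rank and closure\<close>

locale finite_matroid =
  fixes E :: "'a set" and Ind :: "'a set set"
  assumes matroid: "matroid E Ind"
begin

lemma finite_E: "finite E"
  using matroid by (simp add: matroid_def)

lemma indep_subset_E: "I \<in> Ind \<Longrightarrow> I \<subseteq> E"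
  using matroid by (auto simp: matroid_def)

lemma finite_indep: "I \<in> Ind \<Longrightarrow> finite I"
  using indep_subset_E finite_E finite_subset by blast

lemma empty_indep: "{} \<in> Ind"
  using matroid by (simp add: matroid_def)

lemma indep_subset: "J \<in> Ind \<Longrightarrow> I \<subseteq> J \<Longrightarrow> I \<in> Ind"
  using matroid by (simp add: matroid_def)

lemma indep_augment:
  "I \<in> Ind \<Longrightarrow> J \<in> Ind \<Longrightarrow> card I < card J \<Longrightarrow> \<exists>x \<in> J - I. insert x I \<in> Ind"
  using matroid by (simp add: matroid_def)

lemma finite_flats: "finite (flats E Ind)"
proof -
  have "flats E Ind \<subseteq> Pow E"
    by (auto simp: flats_def flat_def)
  then show ?thesis
    using finite_E finite_subset by blast
qed

lemma finite_indep_subsets: "finite {I. I \<subseteq> S \<and> I \<in> Ind}"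
proof -
  have "{I. I \<subseteq> S \<and> I \<in> Ind} \<subseteq> Pow E"
    using indep_subset_E by auto
  then show ?thesis
    using finite_E finite_subset by blast
qed

lemma card_le_rk: "I \<in> Ind \<Longrightarrow> I \<subseteq> S \<Longrightarrow> card I \<le> rk Ind S"
  unfolding rk_def using finite_indep_subsets by (intro Max_ge) auto

definition basis_of :: "'a set \<Rightarrow> 'a set \<Rightarrow> bool" where
  "basis_of I S \<longleftrightarrow> I \<subseteq> S \<and> I \<in> Ind \<and> card I = rk Ind S"

lemma basis_exists: "\<exists>I. basis_of I S"
proof -
  have "rk Ind S \<in> card ` {I. I \<subseteq> S \<and> I \<in> Ind}"
    unfolding rk_def
  proof (rule Max_in)
    show "finite (card ` {I. I \<subseteq> S \<and> I \<in> Ind})"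
      using finite_indep_subsets by (rule finite_imageI)
    show "card ` {I. I \<subseteq> S \<and> I \<in> Ind} \<noteq> {}"
      using empty_indep by blast
  qed
  then obtain I where "rk Ind S = card I" "I \<in> {I. I \<subseteq> S \<and> I \<in> Ind}"
    by (rule imageE)
  then show ?thesis
    unfolding basis_of_def by auto
qed

lemma rk_mono:
  assumes "S \<subseteq> T"
  shows "rk Ind S \<le> rk Ind T"
proof -
  obtain I where "basis_of I S"
    using basis_exists by blast
  then show ?thesis
    using card_le_rk[of I T] assms unfolding basis_of_def by auto
qed

lemma basis_extend:
  assumes "I \<in> Ind" "I \<subseteq> S"
  shows "\<exists>J. I \<subseteq> J \<and> basis_of J S"
  using assms
proof (induction "rk Ind S - card I" arbitrary: I rule: less_induct)
  case less
  show ?case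
  proof (cases "card I = rk Ind S")
    case True
    then show ?thesis
      using less.prems unfolding basis_of_def by blast
  next
    case False
    obtain B where B: "B \<subseteq> S" "B \<in> Ind" "card B = rk Ind S"
      using basis_exists unfolding basis_of_def by blast
    have "card I < card B"
      using False card_le_rk[OF less.prems] B(3) by simp
    then obtain x where x: "x \<in> B - I" "insert x I \<in> Ind"
      using indep_augment[OF less.prems(1) B(2)] by blast
    have "card (insert x I) = Suc (card I)"
      using x finite_indep[OF less.prems(1)] by simp
    then have decr: "rk Ind S - card (insert x I) < rk Ind S - card I"
      using \<open>card I < card B\<close> B(3) by simp
    have "insert x I \<subseteq> S"
      using x B(1) less.prems(2) by blast
    then obtain J where "insert x I \<subseteq> J" "basis_of J S"
      using less.hyps[OF decr x(2)] by blast
    then show ?thesis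
      by blast
  qed
qed

lemma indep_basis_of_self:
  assumes "I \<in> Ind"
  shows "basis_of I I"
proof -
  obtain J where J: "J \<subseteq> I" "card J = rk Ind I"
    using basis_exists unfolding basis_of_def by blast
  have "card J \<le> card I"
    using card_mono[OF finite_indep[OF assms] J(1)] .
  then show ?thesis
    using card_le_rk[OF assms, of I] J(2) assms unfolding basis_of_def by simp
qed

lemma rk_insert_gt:
  assumes I: "basis_of I S" and indep: "insert x I \<in> Ind" and x: "x \<notin> I"
  shows "rk Ind S < rk Ind (insert x S)"
proof -
  have "card (insert x I) \<le> rk Ind (insert x S)"
    using card_le_rk[OF indep, of "insert x S"] I unfolding basis_of_def by blast
  moreover have "finite I"
    using I finite_indep unfolding basis_of_def by blast
  then have "card (insert x I) = Suc (rk Ind S)"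
    using I x unfolding basis_of_def by simp
  ultimately show ?thesis
    by simp
qed

lemma rk_insert_gt_imp_indep:
  assumes I: "basis_of I S" and less: "rk Ind S < rk Ind (insert x S)"
  shows "x \<notin> I \<and> insert x I \<in> Ind"
proof -
  have I_ind: "I \<in> Ind" and I_sub: "I \<subseteq> S" and I_card: "card I = rk Ind S"
    using I unfolding basis_of_def by simp_all
  obtain J where J: "I \<subseteq> J" "basis_of J (insert x S)"
    using basis_extend[OF I_ind, of "insert x S"] I_sub by blast
  have "\<not> J \<subseteq> I"
  proof
    assume "J \<subseteq> I"
    then have "card J \<le> card I"
      by (rule card_mono[OF finite_indep[OF I_ind]])
    then show False
      using less I_card J(2) by (simp add: basis_of_def)
  qed
  then obtain y where y: "y \<in> J" "y \<notin> I"
    by blast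
  have y_ind: "insert y I \<in> Ind"
    using indep_subset[of J "insert y I"] J y(1) unfolding basis_of_def by blast
  have "y \<notin> S"
  proof
    assume "y \<in> S"
    then have "insert y S = S"
      by blast
    then show False
      using rk_insert_gt[OF I y_ind y(2)] by simp
  qed
  then have "y = x"
    using y(1) J(2) unfolding basis_of_def by blast
  then show ?thesis
    using y y_ind by blast
qed

lemma mem_cl_iff_basis:
  assumes I: "basis_of I S"
  shows "x \<in> cl E Ind S \<longleftrightarrow> x \<in> E \<and> (insert x I \<in> Ind \<longrightarrow> x \<in> I)"
proof -
  have le: "rk Ind S \<le> rk Ind (insert x S)"
    by (rule rk_mono) blast
  have "rk Ind (insert x S) = rk Ind S \<longleftrightarrow> (insert x I \<in> Ind \<longrightarrow> x \<in> I)"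
  proof (cases "rk Ind S < rk Ind (insert x S)")
    case True
    then show ?thesis
      using rk_insert_gt_imp_indep[OF I] by auto
  next
    case False
    then show ?thesis
      using rk_insert_gt[OF I] le by auto
  qed
  then show ?thesis
    by (simp add: cl_def)
qed

lemma cl_subset_E: "cl E Ind S \<subseteq> E"
  by (auto simp: cl_def)

lemma subset_cl: "S \<subseteq> E \<Longrightarrow> S \<subseteq> cl E Ind S"
  by (auto simp: cl_def insert_absorb)

lemma cl_mono:
  assumes "S \<subseteq> T"
  shows "cl E Ind S \<subseteq> cl E Ind T"
proof
  fix x
  assume x: "x \<in> cl E Ind S"
  obtain I where I: "basis_of I S"
    using basis_exists by blast
  then obtain J where J: "I \<subseteq> J" "basis_of J T"
    using basis_extend[of I T] assms by (auto simp: basis_of_def)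
  have x_I: "x \<in> E \<and> (insert x I \<in> Ind \<longrightarrow> x \<in> I)"
    using x unfolding mem_cl_iff_basis[OF I] .
  have "x \<in> J" if "insert x J \<in> Ind"
  proof -
    have "insert x I \<in> Ind"
      using indep_subset[OF that] J(1) by blast
    then show ?thesis
      using x_I J(1) by blast
  qed
  then show "x \<in> cl E Ind T"
    unfolding mem_cl_iff_basis[OF J(2)] using x_I by blast
qed

lemma basis_of_cl:
  assumes I: "basis_of I S" and "S \<subseteq> E"
  shows "basis_of I (cl E Ind S)"
proof -
  have IS: "I \<subseteq> cl E Ind S"
    using I subset_cl[OF \<open>S \<subseteq> E\<close>] by (auto simp: basis_of_def)
  then obtain J where J: "I \<subseteq> J" "basis_of J (cl E Ind S)"
    using basis_extend[of I "cl E Ind S"] I by (auto simp: basis_of_def)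
  have "J \<subseteq> I"
  proof
    fix y
    assume "y \<in> J"
    then show "y \<in> I"
      using J indep_subset[of J "insert y I"] mem_cl_iff_basis[OF I, of y]
      by (auto simp: basis_of_def)
  qed
  then show ?thesis
    using J subset_antisym by metis
qed

lemma cl_idem:
  assumes "S \<subseteq> E"
  shows "cl E Ind (cl E Ind S) = cl E Ind S"
proof -
  obtain I where I: "basis_of I S"
    using basis_exists by blast
  show ?thesis
    by (rule set_eqI)
      (simp only: mem_cl_iff_basis[OF I] mem_cl_iff_basis[OF basis_of_cl[OF I assms]])
qed

lemma flat_cl: "S \<subseteq> E \<Longrightarrow> flat E Ind (cl E Ind S)"
  using cl_subset_E cl_idem by (simp add: flat_def)

lemma cl_subset_flat: "flat E Ind F \<Longrightarrow> S \<subseteq> F \<Longrightarrow> cl E Ind S \<subseteq> F"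
  using cl_mono unfolding flat_def by blast

lemma flat_Int:
  assumes "flat E Ind F" "flat E Ind G"
  shows "flat E Ind (F \<inter> G)"
proof -
  have "cl E Ind (F \<inter> G) \<subseteq> F \<inter> G"
    using cl_subset_flat[OF assms(1)] cl_subset_flat[OF assms(2)] by blast
  moreover have "F \<inter> G \<subseteq> E"
    using assms(1) by (auto simp: flat_def)
  ultimately show ?thesis
    using subset_cl[of "F \<inter> G"] by (auto simp: flat_def)
qed

end

locale simple_matroid = finite_matroid +
  assumes simple: "simple E Ind"
begin

lemma singleton_indep: "x \<in> E \<Longrightarrow> {x} \<in> Ind"
  using simple unfolding simple_def by (metis insert_absorb2)

lemma cl_empty: "cl E Ind {} = {}"
  unfolding set_eq_iff mem_cl_iff_basis[OF indep_basis_of_self[OF empty_indep]]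
  using singleton_indep by auto

lemma cl_singleton:
  assumes "a \<in> E"
  shows "cl E Ind {a} = {a}"
  unfolding set_eq_iff mem_cl_iff_basis[OF indep_basis_of_self[OF singleton_indep[OF assms]]]
  using simple assms by (auto simp: simple_def)

lemma flat_empty: "flat E Ind {}"
  using cl_empty by (simp add: flat_def)

lemma flat_singleton: "a \<in> E \<Longrightarrow> flat E Ind {a}"
  using cl_singleton by (simp add: flat_def)

lemma interval_eq: "interval E Ind G = {X. flat E Ind X \<and> X \<subseteq> G}"
  by (auto simp: interval_def flats_def cl_empty)

end


section \<open>Building sets as direct sum decompositions\<close>

lemma join_fam_restrict: "join_fam E Ind A (restrict f A) = cl E Ind (\<Union>G\<in>A. f G)"
  by (simp add: join_fam_def)

lemma PiE_intervalD:
  "x \<in> (\<Pi>\<^sub>E G\<in>A. interval E Ind G) \<Longrightarrow> G \<in> A \<Longrightarrow> flat E Ind (x G) \<and> x G \<subseteq> G"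
  by (auto simp: interval_def flats_def)

definition join_iso :: "'a set \<Rightarrow> 'a set set \<Rightarrow> 'a set set \<Rightarrow> 'a set \<Rightarrow> bool" where
  "join_iso E Ind A F \<longleftrightarrow>
     bij_betw (join_fam E Ind A) (\<Pi>\<^sub>E G\<in>A. interval E Ind G) (interval E Ind F) \<and>
     (\<forall>x \<in> \<Pi>\<^sub>E G\<in>A. interval E Ind G. \<forall>y \<in> \<Pi>\<^sub>E G\<in>A. interval E Ind G.
        (\<forall>G\<in>A. x G \<subseteq> y G) \<longleftrightarrow> join_fam E Ind A x \<subseteq> join_fam E Ind A y)"

lemma building_set_iff_join_iso:
  "building_set E Ind \<G> \<longleftrightarrow> \<G> \<subseteq> flats E Ind - {cl E Ind {}} \<and>
     (\<forall>F \<in> flats E Ind. F \<noteq> cl E Ind {} \<longrightarrow> join_iso E Ind (maxG \<G> F) F)"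
  by (simp add: building_set_def join_iso_def Let_def)

lemma join_iso_inj:
  "join_iso E Ind A F \<Longrightarrow> inj_on (join_fam E Ind A) (\<Pi>\<^sub>E G\<in>A. interval E Ind G)"
  by (simp add: join_iso_def bij_betw_def)

lemma join_iso_image:
  "join_iso E Ind A F \<Longrightarrow> join_fam E Ind A ` (\<Pi>\<^sub>E G\<in>A. interval E Ind G) = interval E Ind F"
  by (simp add: join_iso_def bij_betw_def)

text \<open>The restriction of the matroid to F is the direct sum of its restrictions to the members of A.\<close>
definition direct_sum :: "'a set \<Rightarrow> 'a set set \<Rightarrow> 'a set set \<Rightarrow> 'a set \<Rightarrow> bool" where
  "direct_sum E Ind A F \<longleftrightarrow> A \<subseteq> flats E Ind \<and> pairwise disjnt A \<and> \<Union>A = F \<and>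
     (\<forall>X \<subseteq> F. cl E Ind X = (\<Union>G\<in>A. cl E Ind (X \<inter> G)))"

lemma direct_sum_flats: "direct_sum E Ind A F \<Longrightarrow> A \<subseteq> flats E Ind"
  by (simp add: direct_sum_def)

lemma direct_sum_flat: "direct_sum E Ind A F \<Longrightarrow> G \<in> A \<Longrightarrow> flat E Ind G"
  by (auto simp: direct_sum_def flats_def)

lemma direct_sum_disjoint:
  "direct_sum E Ind A F \<Longrightarrow> G \<in> A \<Longrightarrow> H \<in> A \<Longrightarrow> G \<noteq> H \<Longrightarrow> G \<inter> H = {}"
  unfolding direct_sum_def pairwise_def disjnt_def by blast

lemma direct_sum_Union: "direct_sum E Ind A F \<Longrightarrow> \<Union>A = F"
  by (simp add: direct_sum_def)

lemma direct_sum_cl_split: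
  "direct_sum E Ind A F \<Longrightarrow> X \<subseteq> F \<Longrightarrow> cl E Ind X = (\<Union>G\<in>A. cl E Ind (X \<inter> G))"
  by (simp add: direct_sum_def)

definition single_fam :: "'a set set \<Rightarrow> 'a set \<Rightarrow> 'a set \<Rightarrow> 'a set \<Rightarrow> 'a set" where
  "single_fam A G X = (\<lambda>H\<in>A. if H = G then X else {})"

lemma maxG_above:
  assumes "finite \<G>" "G \<in> \<G>" "G \<subseteq> F"
  obtains H where "H \<in> maxG \<G> F" "G \<subseteq> H"
proof -
  obtain H where H: "H \<in> \<G>" "H \<subseteq> F" "G \<subseteq> H"
    and max: "\<forall>H' \<in> {H \<in> \<G>. H \<subseteq> F}. H \<subseteq> H' \<longrightarrow> H = H'"
    using finite_has_maximal2[of "{H \<in> \<G>. H \<subseteq> F}" G] assms by auto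
  have "H \<in> maxG \<G> F"
    unfolding maxG_def using H max by auto
  then show ?thesis
    using that H(3) by blast
qed

context simple_matroid
begin

lemma restrict_Int_mem_PiE:
  assumes "flat E Ind Y" "A \<subseteq> flats E Ind"
  shows "(\<lambda>G\<in>A. Y \<inter> G) \<in> (\<Pi>\<^sub>E G\<in>A. interval E Ind G)"
  using assms flat_Int unfolding restrict_PiE_iff interval_eq by (auto simp: flats_def)

lemma restrict_cl_Int_mem_PiE:
  assumes "X \<subseteq> E" "A \<subseteq> flats E Ind"
  shows "(\<lambda>G\<in>A. cl E Ind (X \<inter> G)) \<in> (\<Pi>\<^sub>E G\<in>A. interval E Ind G)"
  unfolding restrict_PiE_iff interval_eq
proof (intro ballI CollectI conjI)
  fix G
  assume "G \<in> A"
  show "flat E Ind (cl E Ind (X \<inter> G))"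
    using assms(1) by (intro flat_cl) blast
  show "cl E Ind (X \<inter> G) \<subseteq> G"
    using assms(2) \<open>G \<in> A\<close> by (intro cl_subset_flat) (auto simp: flats_def)
qed

lemma single_fam_mem_PiE:
  "flat E Ind X \<Longrightarrow> X \<subseteq> G \<Longrightarrow> single_fam A G X \<in> (\<Pi>\<^sub>E H\<in>A. interval E Ind H)"
  unfolding single_fam_def restrict_PiE_iff interval_eq using flat_empty by auto

lemma join_single_fam:
  assumes "G \<in> A"
  shows "join_fam E Ind A (single_fam A G X) = cl E Ind X"
proof -
  have "(\<Union>H\<in>A. if H = G then X else {}) = X"
    using assms by auto
  then show ?thesis
    unfolding single_fam_def join_fam_restrict by simp
qed

lemma join_fam_direct_sum:
  assumes D: "direct_sum E Ind A F" and x: "x \<in> (\<Pi>\<^sub>E G\<in>A. interval E Ind G)"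
  shows "join_fam E Ind A x = (\<Union>G\<in>A. x G)"
proof -
  let ?U = "\<Union>G\<in>A. x G"
  have U_Int: "?U \<inter> H = x H" if "H \<in> A" for H
    using PiE_intervalD[OF x] direct_sum_disjoint[OF D _ that] that by blast
  have "?U \<subseteq> F"
    using PiE_intervalD[OF x] direct_sum_Union[OF D] by blast
  then have "cl E Ind ?U = (\<Union>H\<in>A. cl E Ind (?U \<inter> H))"
    by (rule direct_sum_cl_split[OF D])
  also have "\<dots> = ?U"
    using U_Int PiE_intervalD[OF x] by (simp add: flat_def)
  finally show ?thesis
    by (simp add: join_fam_def)
qed

lemma direct_sum_join_Int:
  assumes D: "direct_sum E Ind A F" and x: "x \<in> (\<Pi>\<^sub>E G\<in>A. interval E Ind G)" and H: "H \<in> A"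
  shows "join_fam E Ind A x \<inter> H = x H"
proof -
  have "x G \<inter> H = {}" if "G \<in> A" "G \<noteq> H" for G
    using PiE_intervalD[OF x that(1)] direct_sum_disjoint[OF D that(1) H that(2)] by blast
  then show ?thesis
    unfolding join_fam_direct_sum[OF D x] using PiE_intervalD[OF x H] H by blast
qed

lemma direct_sum_join_inj:
  assumes D: "direct_sum E Ind A F"
  shows "inj_on (join_fam E Ind A) (\<Pi>\<^sub>E G\<in>A. interval E Ind G)"
proof (rule inj_onI)
  fix x y
  assume x: "x \<in> (\<Pi>\<^sub>E G\<in>A. interval E Ind G)" and y: "y \<in> (\<Pi>\<^sub>E G\<in>A. interval E Ind G)"
    and eq: "join_fam E Ind A x = join_fam E Ind A y"
  show "x = y"
  proof (rule PiE_ext[OF x y])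
    fix H
    assume "H \<in> A"
    then show "x H = y H"
      using direct_sum_join_Int[OF D x] direct_sum_join_Int[OF D y] eq by metis
  qed
qed

lemma direct_sum_join_image:
  assumes D: "direct_sum E Ind A F"
  shows "join_fam E Ind A ` (\<Pi>\<^sub>E G\<in>A. interval E Ind G) = interval E Ind F"
proof (intro equalityI subsetI)
  fix Y
  assume "Y \<in> join_fam E Ind A ` (\<Pi>\<^sub>E G\<in>A. interval E Ind G)"
  then obtain x where x: "x \<in> (\<Pi>\<^sub>E G\<in>A. interval E Ind G)" and Y: "Y = join_fam E Ind A x"
    by blast
  have "(\<Union>G\<in>A. x G) \<subseteq> E"
    using PiE_intervalD[OF x] direct_sum_flat[OF D] by (force simp: flat_def)
  then have "flat E Ind Y"
    unfolding Y join_fam_def by (rule flat_cl)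
  moreover have "Y \<subseteq> F"
    unfolding Y join_fam_direct_sum[OF D x] using PiE_intervalD[OF x] direct_sum_Union[OF D]
    by blast
  ultimately show "Y \<in> interval E Ind F"
    by (simp add: interval_eq)
next
  fix Y
  assume "Y \<in> interval E Ind F"
  then have Y: "flat E Ind Y" "Y \<subseteq> F"
    by (auto simp: interval_eq)
  have w: "(\<lambda>G\<in>A. Y \<inter> G) \<in> (\<Pi>\<^sub>E G\<in>A. interval E Ind G)"
    using restrict_Int_mem_PiE[OF Y(1) direct_sum_flats[OF D]] .
  have "join_fam E Ind A (\<lambda>G\<in>A. Y \<inter> G) = Y"
    using join_fam_direct_sum[OF D w] Y(2) direct_sum_Union[OF D] by auto
  then show "Y \<in> join_fam E Ind A ` (\<Pi>\<^sub>E G\<in>A. interval E Ind G)"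
    using w by (metis image_eqI)
qed

lemma direct_sum_imp_join_iso:
  assumes D: "direct_sum E Ind A F"
  shows "join_iso E Ind A F"
proof -
  let ?P = "\<Pi>\<^sub>E G\<in>A. interval E Ind G" and ?J = "join_fam E Ind A"
  have "(\<forall>G\<in>A. x G \<subseteq> y G) \<longleftrightarrow> ?J x \<subseteq> ?J y" if x: "x \<in> ?P" and y: "y \<in> ?P" for x y
  proof
    assume "\<forall>G\<in>A. x G \<subseteq> y G"
    then show "?J x \<subseteq> ?J y"
      unfolding join_fam_direct_sum[OF D x] join_fam_direct_sum[OF D y] by blast
  next
    assume le: "?J x \<subseteq> ?J y"
    show "\<forall>G\<in>A. x G \<subseteq> y G"
    proof
      fix G
      assume "G \<in> A"
      then show "x G \<subseteq> y G"
        using direct_sum_join_Int[OF D x \<open>G \<in> A\<close>] direct_sum_join_Int[OF D y \<open>G \<in> A\<close>] le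
        by blast
    qed
  qed
  then show ?thesis
    unfolding join_iso_def bij_betw_def
    using direct_sum_join_inj[OF D] direct_sum_join_image[OF D] by simp
qed

lemma join_iso_imp_subset:
  assumes iso: "join_iso E Ind A F" and A: "A \<subseteq> flats E Ind" and G: "G \<in> A"
  shows "G \<subseteq> F"
proof -
  have G_flat: "flat E Ind G"
    using A G by (auto simp: flats_def)
  then have "single_fam A G G \<in> (\<Pi>\<^sub>E H\<in>A. interval E Ind H)"
    using single_fam_mem_PiE by blast
  then have "join_fam E Ind A (single_fam A G G) \<in> interval E Ind F"
    using join_iso_image[OF iso] by blast
  then show ?thesis
    using join_single_fam[OF G] G_flat by (simp add: interval_eq flat_def)
qed

lemma join_iso_imp_disjoint:
  assumes iso: "join_iso E Ind A F" and A: "A \<subseteq> flats E Ind"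
  shows "pairwise disjnt A"
proof
  fix G H
  assume G: "G \<in> A" and H: "H \<in> A" and "G \<noteq> H"
  show "disjnt G H"
  proof (rule ccontr)
    assume "\<not> disjnt G H"
    then obtain a where a: "a \<in> G" "a \<in> H"
      by (auto simp: disjnt_def)
    then have a_flat: "flat E Ind {a}"
      using A G flat_singleton by (auto simp: flats_def flat_def)
    have "join_fam E Ind A (single_fam A G {a}) = join_fam E Ind A (single_fam A H {a})"
      using join_single_fam G H by simp
    then have "single_fam A G {a} = single_fam A H {a}"
      using join_iso_inj[OF iso] single_fam_mem_PiE[OF a_flat] a by (simp add: inj_on_eq_iff)
    then have "single_fam A G {a} G = single_fam A H {a} G"
      by simp
    then show False
      using G \<open>G \<noteq> H\<close> by (simp add: single_fam_def)
  qed
qed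

lemma join_iso_imp_Union:
  assumes iso: "join_iso E Ind A F" and A: "A \<subseteq> flats E Ind" and F: "flat E Ind F"
  shows "\<Union>A = F"
proof
  show "\<Union>A \<subseteq> F"
    using join_iso_imp_subset[OF iso A] by blast
  show "F \<subseteq> \<Union>A"
  proof
    fix a
    assume "a \<in> F"
    then have "{a} \<in> interval E Ind F"
      using F flat_singleton by (auto simp: interval_eq flat_def)
    then obtain x where x: "x \<in> (\<Pi>\<^sub>E G\<in>A. interval E Ind G)" and Jx: "join_fam E Ind A x = {a}"
      using join_iso_image[OF iso] by (metis imageE)
    have "(\<Union>G\<in>A. x G) \<subseteq> E"
      using PiE_intervalD[OF x] A by (force simp: flats_def flat_def)
    then have "(\<Union>G\<in>A. x G) \<subseteq> {a}"
      using subset_cl Jx unfolding join_fam_def by blast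
    moreover have "(\<Union>G\<in>A. x G) \<noteq> {}"
    proof
      assume "(\<Union>G\<in>A. x G) = {}"
      then show False
        using Jx cl_empty unfolding join_fam_def by simp
    qed
    ultimately show "a \<in> \<Union>A"
      using PiE_intervalD[OF x] by blast
  qed
qed

lemma join_iso_imp_cl_split:
  assumes iso: "join_iso E Ind A F" and A: "A \<subseteq> flats E Ind" and F: "flat E Ind F"
    and X: "X \<subseteq> F"
  shows "cl E Ind X = (\<Union>G\<in>A. cl E Ind (X \<inter> G))"
proof -
  let ?J = "join_fam E Ind A" and ?Y = "cl E Ind X"
  define z where "z = (\<lambda>G\<in>A. cl E Ind (X \<inter> G))"
  define w where "w = (\<lambda>G\<in>A. ?Y \<inter> G)"
  have U: "\<Union>A = F"
    using join_iso_imp_Union[OF iso A F] .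
  have X_E: "X \<subseteq> E"
    using X F by (auto simp: flat_def)
  have Y_flat: "flat E Ind ?Y" and Y_F: "?Y \<subseteq> F"
    using flat_cl[OF X_E] cl_subset_flat[OF F X] .
  have "X \<subseteq> (\<Union>G\<in>A. cl E Ind (X \<inter> G))"
    using X U X_E subset_cl[of "X \<inter> _"] by blast
  then have "?Y \<subseteq> ?J z"
    unfolding z_def join_fam_restrict by (rule cl_mono)
  moreover have "?J z \<subseteq> ?Y"
    unfolding z_def join_fam_restrict using Y_flat cl_subset_flat cl_mono by (simp add: SUP_least)
  moreover have "(\<Union>G\<in>A. ?Y \<inter> G) = ?Y"
    using Y_F U by blast
  then have "?J w = ?Y"
    unfolding w_def join_fam_restrict using Y_flat by (simp add: flat_def)
  ultimately have "z = w"
    using join_iso_inj[OF iso] restrict_cl_Int_mem_PiE[OF X_E A] restrict_Int_mem_PiE[OF Y_flat A]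
    unfolding z_def w_def by (simp add: inj_on_eq_iff)
  have "cl E Ind (X \<inter> G) = ?Y \<inter> G" if "G \<in> A" for G
    using fun_cong[OF \<open>z = w\<close>, of G] that by (simp add: z_def w_def)
  then show ?thesis
    using Y_F U by auto
qed

lemma join_iso_iff_direct_sum:
  assumes A: "A \<subseteq> flats E Ind" and F: "flat E Ind F"
  shows "join_iso E Ind A F \<longleftrightarrow> direct_sum E Ind A F"
proof
  assume iso: "join_iso E Ind A F"
  show "direct_sum E Ind A F"
    unfolding direct_sum_def
    using A join_iso_imp_disjoint[OF iso A] join_iso_imp_Union[OF iso A F]
      join_iso_imp_cl_split[OF iso A F] by blast
qed (rule direct_sum_imp_join_iso)

lemma building_set_iff_direct_sum:
  "building_set E Ind \<G> \<longleftrightarrow> \<G> \<subseteq> flats E Ind - {{}} \<and>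
     (\<forall>F \<in> flats E Ind. F \<noteq> {} \<longrightarrow> direct_sum E Ind (maxG \<G> F) F)"
proof -
  have "join_iso E Ind (maxG \<G> F) F \<longleftrightarrow> direct_sum E Ind (maxG \<G> F) F"
    if "\<G> \<subseteq> flats E Ind" "F \<in> flats E Ind" for F
    using join_iso_iff_direct_sum[of "maxG \<G> F" F] that by (auto simp: maxG_def flats_def)
  then show ?thesis
    unfolding building_set_iff_join_iso cl_empty by blast
qed

end

section \<open>Deletion\<close>

lemma matroid_del_ind:
  assumes "matroid E Ind"
  shows "matroid (E - {e}) (del_ind Ind e)"
proof -
  have aug: "\<exists>x \<in> J - I. insert x I \<in> Ind" if "I \<in> Ind" "J \<in> Ind" "card I < card J" for I J
    using assms that by (simp add: matroid_def)
  have "\<exists>x \<in> J - I. insert x I \<in> del_ind Ind e"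
    if I: "I \<in> del_ind Ind e" and J: "J \<in> del_ind Ind e" and less: "card I < card J" for I J
  proof -
    obtain x where "x \<in> J - I" "insert x I \<in> Ind"
      using aug[OF _ _ less] I J by (auto simp: del_ind_def)
    then show ?thesis
      using I J by (auto simp: del_ind_def)
  qed
  moreover have "finite (E - {e})" "del_ind Ind e \<subseteq> Pow (E - {e})" "{} \<in> del_ind Ind e"
    "\<forall>I J. J \<in> del_ind Ind e \<longrightarrow> I \<subseteq> J \<longrightarrow> I \<in> del_ind Ind e"
    using assms by (auto simp: matroid_def del_ind_def)
  ultimately show ?thesis
    unfolding matroid_def by blast
qed

lemma simple_del_ind: "simple E Ind \<Longrightarrow> simple (E - {e}) (del_ind Ind e)"
  by (auto simp: simple_def del_ind_def)

lemma rk_del_ind: "rk (del_ind Ind e) S = rk Ind (S - {e})"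
proof -
  have "{I. I \<subseteq> S \<and> I \<in> del_ind Ind e} = {I. I \<subseteq> S - {e} \<and> I \<in> Ind}"
    by (auto simp: del_ind_def)
  then show ?thesis
    by (simp add: rk_def)
qed

lemma cl_del_ind: "cl (E - {e}) (del_ind Ind e) S = cl E Ind (S - {e}) - {e}"
proof -
  have "insert x S - {e} = insert x (S - {e})" if "x \<noteq> e" for x
    using that by blast
  then show ?thesis
    by (auto simp: cl_def rk_del_ind)
qed

lemma flat_del_ind_iff:
  "flat (E - {e}) (del_ind Ind e) S \<longleftrightarrow> S \<subseteq> E - {e} \<and> cl E Ind S - {e} = S"
proof -
  have "S \<subseteq> E - {e} \<Longrightarrow> S - {e} = S"
    by blast
  then show ?thesis
    unfolding flat_def cl_del_ind by metis
qed

definition del_building :: "'a set \<Rightarrow> 'a set set \<Rightarrow> 'a set set \<Rightarrow> 'a \<Rightarrow> 'a set set" where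
  "del_building E Ind \<G> e = {S \<in> flats (E - {e}) (del_ind Ind e). cl E Ind S \<in> \<G>}"

context finite_matroid
begin

text \<open>If e lies in the closure of F - {e}, it does so inside the summand containing it.\<close>
lemma direct_sum_cl_Diff:
  assumes D: "direct_sum E Ind A F" and F: "cl E Ind (F - {e}) = F" and G: "G \<in> A"
  shows "cl E Ind (G - {e}) = G"
proof
  have G_flat: "flat E Ind G"
    using direct_sum_flat[OF D G] .
  then show "cl E Ind (G - {e}) \<subseteq> G"
    using cl_subset_flat by blast
  have "G - {e} \<subseteq> E"
    using G_flat by (auto simp: flat_def)
  then have G_sub: "G - {e} \<subseteq> cl E Ind (G - {e})"
    by (rule subset_cl)
  have "e \<in> cl E Ind (G - {e})" if "e \<in> G"
  proof -
    have F_sub: "F - {e} \<subseteq> F"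
      by blast
    have "e \<in> F"
      using that G direct_sum_Union[OF D] by blast
    then obtain H where H: "H \<in> A" "e \<in> cl E Ind ((F - {e}) \<inter> H)"
      using direct_sum_cl_split[OF D F_sub] F by auto
    then have "e \<in> H"
      using cl_subset_flat[OF direct_sum_flat[OF D H(1)]] by blast
    then have "H = G"
      using direct_sum_disjoint[OF D H(1) G] that by blast
    moreover have "(F - {e}) \<inter> G = G - {e}"
      using G direct_sum_Union[OF D] by blast
    ultimately show ?thesis
      using H(2) by simp
  qed
  then show "G \<subseteq> cl E Ind (G - {e})"
    using G_sub by blast
qed

lemma direct_sum_del_ind:
  assumes D: "direct_sum E Ind A F" and F: "cl E Ind (F - {e}) = F"
  shows "direct_sum (E - {e}) (del_ind Ind e) ((\<lambda>G. G - {e}) ` A) (F - {e})"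
  unfolding direct_sum_def
proof (intro conjI allI impI)
  have "flat (E - {e}) (del_ind Ind e) (G - {e})" if "G \<in> A" for G
    using direct_sum_cl_Diff[OF D F that] direct_sum_flat[OF D that]
    unfolding flat_del_ind_iff by (auto simp: flat_def)
  then show "(\<lambda>G. G - {e}) ` A \<subseteq> flats (E - {e}) (del_ind Ind e)"
    by (auto simp: flats_def)
  show "pairwise disjnt ((\<lambda>G. G - {e}) ` A)"
    using D by (intro disjoint_image_subset) (auto simp: direct_sum_def)
  show "\<Union>((\<lambda>G. G - {e}) ` A) = F - {e}"
    using direct_sum_Union[OF D] by blast
  fix X
  assume X: "X \<subseteq> F - {e}"
  then have X_e: "X - {e} = X" and X_G: "X \<inter> (G - {e}) - {e} = X \<inter> G" for G
    by blast+
  have "cl (E - {e}) (del_ind Ind e) X = cl E Ind X - {e}"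
    by (simp add: cl_del_ind X_e)
  also have "\<dots> = (\<Union>G\<in>A. cl E Ind (X \<inter> G) - {e})"
    using direct_sum_cl_split[OF D] X by auto
  also have "\<dots> = (\<Union>G\<in>A. cl (E - {e}) (del_ind Ind e) (X \<inter> (G - {e})))"
    by (simp add: cl_del_ind X_G)
  finally show "cl (E - {e}) (del_ind Ind e) X =
      (\<Union>G\<in>(\<lambda>G. G - {e}) ` A. cl (E - {e}) (del_ind Ind e) (X \<inter> G))"
    by simp
qed

end

context simple_matroid
begin

lemma simple_matroid_del_ind: "simple_matroid (E - {e}) (del_ind Ind e)"
  using matroid_del_ind[OF matroid] simple_del_ind[OF simple]
  by (simp add: simple_matroid_def finite_matroid_def simple_matroid_axioms_def)

lemma summand_Diff_mem_del_building:
  assumes \<G>: "\<G> \<subseteq> flats E Ind - {{}}" and D: "direct_sum E Ind (maxG \<G> F) F"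
    and F: "cl E Ind (F - {e}) = F" and G: "G \<in> maxG \<G> F"
  shows "G - {e} \<in> del_building E Ind \<G> e" and "G - {e} \<subseteq> F - {e}" and "G - {e} \<noteq> {}"
proof -
  have cl_G: "cl E Ind (G - {e}) = G"
    using direct_sum_cl_Diff[OF D F G] .
  have "G \<in> \<G>" "G \<subseteq> F"
    using G by (auto simp: maxG_def)
  moreover have "G \<subseteq> E"
    using \<open>G \<in> \<G>\<close> \<G> by (auto simp: flats_def flat_def)
  ultimately show "G - {e} \<in> del_building E Ind \<G> e" "G - {e} \<subseteq> F - {e}"
    unfolding del_building_def flats_def mem_Collect_eq flat_del_ind_iff using cl_G by auto
  show "G - {e} \<noteq> {}"
    using cl_G cl_empty \<open>G \<in> \<G>\<close> \<G> by force
qed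

lemma del_building_below_maxG:
  assumes \<G>: "\<G> \<subseteq> flats E Ind" and F: "cl E Ind (F - {e}) = F"
    and S: "S \<in> del_building E Ind \<G> e" "S \<subseteq> F - {e}"
  shows "\<exists>G \<in> maxG \<G> F. S \<subseteq> G - {e}"
proof -
  have S_E: "S \<subseteq> E - {e}" and cl_S: "cl E Ind S \<in> \<G>"
    using S by (auto simp: del_building_def flats_def flat_del_ind_iff)
  have "cl E Ind S \<subseteq> F"
    using cl_mono[OF S(2)] F by simp
  moreover have "finite \<G>"
    using \<G> finite_flats finite_subset by blast
  ultimately obtain G where "G \<in> maxG \<G> F" "cl E Ind S \<subseteq> G"
    using maxG_above cl_S by blast
  then show ?thesis
    using subset_cl[of S] S_E by blast
qed

lemma maxG_del_building:
  assumes \<G>: "\<G> \<subseteq> flats E Ind - {{}}" and D: "direct_sum E Ind (maxG \<G> F) F"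
    and F: "cl E Ind (F - {e}) = F"
  shows "maxG (del_building E Ind \<G> e) (F - {e}) = (\<lambda>G. G - {e}) ` maxG \<G> F"
proof -
  let ?A = "maxG \<G> F" and ?\<G>' = "del_building E Ind \<G> e"
  note summand = summand_Diff_mem_del_building[OF \<G> D F]
  note below = del_building_below_maxG[of \<G>, OF _ F]
  have eq: "G = H" if "G \<in> ?A" "H \<in> ?A" "G - {e} \<subseteq> H - {e}" for G H
    using direct_sum_disjoint[OF D that(1,2)] summand(3)[OF that(1)] that(3) by blast
  show ?thesis
  proof (intro equalityI subsetI)
    fix S
    assume "S \<in> maxG ?\<G>' (F - {e})"
    then have S: "S \<in> ?\<G>'" "S \<subseteq> F - {e}" and max: "\<not> (\<exists>H \<in> ?\<G>'. H \<subseteq> F - {e} \<and> S \<subset> H)"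
      by (auto simp: maxG_def)
    obtain G where G: "G \<in> ?A" and S_G: "S \<subseteq> G - {e}"
      using below[OF _ S] \<G> by blast
    have "\<not> S \<subset> G - {e}"
      using max summand(1,2)[OF G] by blast
    with S_G G show "S \<in> (\<lambda>G. G - {e}) ` ?A"
      by blast
  next
    fix T
    assume "T \<in> (\<lambda>G. G - {e}) ` ?A"
    then obtain G where G: "G \<in> ?A" and T: "T = G - {e}"
      by blast
    have "\<not> T \<subset> S" if S: "S \<in> ?\<G>'" "S \<subseteq> F - {e}" for S
    proof
      assume "T \<subset> S"
      obtain H where H: "H \<in> ?A" "S \<subseteq> H - {e}"
        using below[OF _ S] \<G> by blast
      then have "G = H"
        using eq[OF G H(1)] \<open>T \<subset> S\<close> T by blast
      then show False
        using H(2) \<open>T \<subset> S\<close> T by blast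
    qed
    then show "T \<in> maxG ?\<G>' (F - {e})"
      using summand(1,2)[OF G] T by (simp add: maxG_def)
  qed
qed

lemma direct_sum_del_building:
  assumes \<G>: "\<G> \<subseteq> flats E Ind - {{}}"
    and D: "\<And>F. F \<in> flats E Ind \<Longrightarrow> F \<noteq> {} \<Longrightarrow> direct_sum E Ind (maxG \<G> F) F"
    and F': "F' \<in> flats (E - {e}) (del_ind Ind e)" "F' \<noteq> {}"
  shows "direct_sum (E - {e}) (del_ind Ind e) (maxG (del_building E Ind \<G> e) F') F'"
proof -
  define F where "F = cl E Ind F'"
  have F'_E: "F' \<subseteq> E" and F'_eq: "F - {e} = F'"
    using F'(1) by (auto simp: F_def flats_def flat_del_ind_iff)
  have "F \<in> flats E Ind" "F \<noteq> {}"
    using flat_cl[OF F'_E] subset_cl[OF F'_E] F'(2) by (auto simp: F_def flats_def)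
  then have "direct_sum E Ind (maxG \<G> F) F"
    by (rule D)
  moreover have "cl E Ind (F - {e}) = F"
    by (subst F'_eq) (simp add: F_def)
  ultimately show ?thesis
    using direct_sum_del_ind maxG_del_building[OF \<G>] F'_eq by metis
qed

end

theorem lemma2p24:
  fixes E :: "'a set" and Ind :: "'a set set" and \<G> :: "'a set set" and e :: 'a
  assumes "matroid E Ind"
    and "simple E Ind"
    and "building_set E Ind \<G>"
    and "e \<in> E"
  shows "building_set (E - {e}) (del_ind Ind e)
           {S \<in> flats (E - {e}) (del_ind Ind e). cl E Ind S \<in> \<G>}"
proof -
  interpret M: simple_matroid E Ind
    using assms(1,2) by (simp add: simple_matroid_def finite_matroid_def simple_matroid_axioms_def)
  interpret N: simple_matroid "E - {e}" "del_ind Ind e"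
    by (rule M.simple_matroid_del_ind)
  have \<G>: "\<G> \<subseteq> flats E Ind - {{}}"
    and D: "\<And>F. F \<in> flats E Ind \<Longrightarrow> F \<noteq> {} \<Longrightarrow> direct_sum E Ind (maxG \<G> F) F"
    using assms(3) unfolding M.building_set_iff_direct_sum by auto
  have "del_building E Ind \<G> e \<subseteq> flats (E - {e}) (del_ind Ind e) - {{}}"
    using \<G> M.cl_empty by (auto simp: del_building_def)
  then show ?thesis
    using M.direct_sum_del_building[OF \<G> D]
    unfolding N.building_set_iff_direct_sum del_building_def by blast
qed

end
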